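(* Let $(X^*,p^* )$ be a market equilibrium of $\mathcal M$, and let $X$ be the allocation with $x_{ij}=m_i/\sum_{i'\in A}m_{i'}$ for all $i\in A$, $j\in G$. Then for every agent $i$, $\mathrm{delay}_i(X^* )\le\mathrm{delay}_i(X)$, where $\mathrm{delay}_i(X)$ is taken to be $+\infty$ if $\mathbf x_i$ does not satisfy CC$(i)$.
   Context: A market $\mathcal M$: finite agent set $A$, finite goods set $G$ (supply $1$ each), finite index set $C$; agent $i$ has real coefficients $a_{ijk}$, requirements $r_{ik}\ge0$, delays $d_{ij}\ge0$, budget $m_i>0$. CC$(i)$: $\sum_ja_{ijk}x_{ij}\ge r_{ik}$ for all $k$, $x_{ij}\ge0$. $(X,p)$ is a market equilibrium if $\sum_ix_{ij}\le1$ for all $j$, each $\mathbf x_i$ minimizes $\sum_jd_{ij}x_{ij}$ subject to CC$(i)$ and $\sum_jp_jx_{ij}\le m_i$, and $\sum_ix_{ij}<1\Rightarrow p_j=0$. $\mathrm{delay}_i(X)=\sum_jd_{ij}x_{ij}$ when $\mathbf x_i$ satisfies CC$(i)$. *)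

theory Defs
  imports Complex_Main "HOL-Library.Extended_Real"
begin

text \<open>Market data: agents set A, goods set G, index set C; coefficients a, requirements r,
  delays d, budgets m. A bundle of agent i is a function x :: 'g \<Rightarrow> real (relevant on G).\<close>

definition CC :: "'g set \<Rightarrow> 'c set \<Rightarrow> ('g \<Rightarrow> 'c \<Rightarrow> real) \<Rightarrow> ('c \<Rightarrow> real)
    \<Rightarrow> ('g \<Rightarrow> real) \<Rightarrow> bool" where
  "CC G C ai ri x \<longleftrightarrow>
     (\<forall>k\<in>C. (\<Sum>j\<in>G. ai j k * x j) \<ge> ri k) \<and> (\<forall>j\<in>G. x j \<ge> 0)"

definition market_equilibrium ::
  "'a set \<Rightarrow> 'g set \<Rightarrow> 'c set \<Rightarrow> ('a \<Rightarrow> 'g \<Rightarrow> 'c \<Rightarrow> real) \<Rightarrow> ('a \<Rightarrow> 'c \<Rightarrow> real)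
   \<Rightarrow> ('a \<Rightarrow> 'g \<Rightarrow> real) \<Rightarrow> ('a \<Rightarrow> real) \<Rightarrow> ('a \<Rightarrow> 'g \<Rightarrow> real) \<Rightarrow> ('g \<Rightarrow> real) \<Rightarrow> bool" where
  "market_equilibrium A G C a r d m X p \<longleftrightarrow>
     (\<forall>j\<in>G. (\<Sum>i\<in>A. X i j) \<le> 1) \<and>
     (\<forall>i\<in>A.
        CC G C (a i) (r i) (X i) \<and> (\<Sum>j\<in>G. p j * X i j) \<le> m i \<and>
        (\<forall>y. CC G C (a i) (r i) y \<and> (\<Sum>j\<in>G. p j * y j) \<le> m i \<longrightarrow>
             (\<Sum>j\<in>G. d i j * X i j) \<le> (\<Sum>j\<in>G. d i j * y j))) \<and>
     (\<forall>j\<in>G. (\<Sum>i\<in>A. X i j) < 1 \<longrightarrow> p j = 0)"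

definition delay :: "'g set \<Rightarrow> 'c set \<Rightarrow> ('a \<Rightarrow> 'g \<Rightarrow> 'c \<Rightarrow> real) \<Rightarrow> ('a \<Rightarrow> 'c \<Rightarrow> real)
   \<Rightarrow> ('a \<Rightarrow> 'g \<Rightarrow> real) \<Rightarrow> 'a \<Rightarrow> ('a \<Rightarrow> 'g \<Rightarrow> real) \<Rightarrow> ereal" where
  "delay G C a r d i X =
     (if CC G C (a i) (r i) (X i) then ereal (\<Sum>j\<in>G. d i j * X i j) else \<infinity>)"

end

theory Submission
  imports Defs
begin

text \<open>Since every good with a positive price is fully sold, the total price of all goods is
  paid out of the agents' budgets, so it is at most \<open>\<Sum>i. m i\<close>.  Hence the proportional
  bundle \<open>x\<^sub>i\<^sub>j = m i / \<Sum>i'. m i'\<close> is affordable for agent \<open>i\<close> at the equilibrium prices.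
  If it also satisfies CC(i), the optimality of the equilibrium bundle gives the inequality;
  otherwise its delay is \<open>\<infinity>\<close>.\<close>

lemma market_equilibrium_price_eq:
  assumes "market_equilibrium A G C a r d m X p" and "j \<in> G"
  shows "p j = p j * (\<Sum>i\<in>A. X i j)"
proof (cases "(\<Sum>i\<in>A. X i j) < 1")
  case True
  then show ?thesis using assms unfolding market_equilibrium_def by auto
next
  case False
  with assms have "(\<Sum>i\<in>A. X i j) = 1" unfolding market_equilibrium_def by force
  then show ?thesis by simp
qed

lemma market_equilibrium_sum_prices_le:
  assumes "market_equilibrium A G C a r d m X p"
  shows "(\<Sum>j\<in>G. p j) \<le> (\<Sum>i\<in>A. m i)"
proof -
  have "(\<Sum>j\<in>G. p j) = (\<Sum>j\<in>G. \<Sum>i\<in>A. p j * X i j)"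
    using market_equilibrium_price_eq[OF assms] by (simp add: sum_distrib_left)
  also have "\<dots> = (\<Sum>i\<in>A. \<Sum>j\<in>G. p j * X i j)"
    by (rule sum.swap)
  also have "\<dots> \<le> (\<Sum>i\<in>A. m i)"
    using assms unfolding market_equilibrium_def by (intro sum_mono) auto
  finally show ?thesis .
qed

lemma constant_bundle_cost_le:
  fixes p :: "'g \<Rightarrow> real"
  assumes "(\<Sum>j\<in>G. p j) \<le> M" and "M > 0" and "b \<ge> 0"
  shows "(\<Sum>j\<in>G. p j * (b / M)) \<le> b"
proof -
  have "(\<Sum>j\<in>G. p j * (b / M)) = (b / M) * (\<Sum>j\<in>G. p j)"
    by (simp add: sum_distrib_left sum_divide_distrib mult.commute)
  also have "\<dots> \<le> (b / M) * M"
    using assms by (intro mult_left_mono) simp_all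
  also have "\<dots> = b"
    using \<open>M > 0\<close> by simp
  finally show ?thesis .
qed

lemma market_equilibrium_delay_le:
  assumes "market_equilibrium A G C a r d m X p" and "i \<in> A"
    and "(\<Sum>j\<in>G. p j * Y i j) \<le> m i"
  shows "delay G C a r d i X \<le> delay G C a r d i Y"
proof (cases "CC G C (a i) (r i) (Y i)")
  case True
  with assms have "(\<Sum>j\<in>G. d i j * X i j) \<le> (\<Sum>j\<in>G. d i j * Y i j)"
    unfolding market_equilibrium_def by blast
  moreover have "CC G C (a i) (r i) (X i)"
    using assms unfolding market_equilibrium_def by blast
  ultimately show ?thesis
    using True unfolding delay_def by simp
next
  case False
  then show ?thesis unfolding delay_def by simp
qed

theorem theoremG3:
  fixes A :: "'a set" and G :: "'g set" and C :: "'c set"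
    and a :: "'a \<Rightarrow> 'g \<Rightarrow> 'c \<Rightarrow> real" and r :: "'a \<Rightarrow> 'c \<Rightarrow> real"
    and d :: "'a \<Rightarrow> 'g \<Rightarrow> real" and m :: "'a \<Rightarrow> real"
    and Xs :: "'a \<Rightarrow> 'g \<Rightarrow> real" and ps :: "'g \<Rightarrow> real"
  assumes "finite A" and "finite G" and "finite C"
    and "\<forall>i\<in>A. \<forall>k\<in>C. r i k \<ge> 0"
    and "\<forall>i\<in>A. \<forall>j\<in>G. d i j \<ge> 0"
    and "\<forall>i\<in>A. m i > 0"
    and "market_equilibrium A G C a r d m Xs ps"
    and "i \<in> A"
  shows "delay G C a r d i Xs \<le> delay G C a r d i (\<lambda>i' j. m i' / (\<Sum>i''\<in>A. m i''))"
proof (rule market_equilibrium_delay_le[OF assms(7,8)])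
  have "(\<Sum>i''\<in>A. m i'') > 0"
    using assms(1,6,8) by (intro sum_pos) auto
  then show "(\<Sum>j\<in>G. ps j * (m i / (\<Sum>i''\<in>A. m i''))) \<le> m i"
    using market_equilibrium_sum_prices_le[OF assms(7)] assms(6,8)
    by (intro constant_bundle_cost_le) auto
qed

end
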